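(* Let $n \geq 2$ and $2 \leq k \leq n$. Then the lower convex envelope of $Q_k$ on the nonnegative orthant $\mathbb{R}_+^n$ is identically $0$, and $Q_k$ has no lower convex envelope on $\mathbb{R}^n$, i.e. there is no convex function $f : \mathbb{R}^n \to \mathbb{R}$ with $f \leq Q_k$ on $\mathbb{R}^n$.
   Context: For $x \in \mathbb{R}^n$ and an integer $1 \leq k \leq n$, $Q_k(x)$ denotes the $k$-th largest entry of $x$ (entries counted with multiplicity). The lower convex envelope of a function $g$ on a convex set $D$ is the pointwise supremum of all convex functions $h : D \to \mathbb{R}$ satisfying $h \leq g$ on $D$ (i.e. the largest convex function below $g$ on $D$). *)

theory Defs
  imports "HOL-Analysis.Analysis" "HOL-Library.Multiset"
begin

text \<open>The k-th largest entry of x (1-based, entries counted with multiplicity).\<close>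
definition Qk :: "nat \<Rightarrow> real ^ 'n \<Rightarrow> real" where
  "Qk k x = rev (sorted_list_of_multiset (image_mset (\<lambda>i. x $ i) (mset_set (UNIV :: 'n set)))) ! (k - 1)"

definition lower_convex_envelope :: "('a::real_vector \<Rightarrow> real) \<Rightarrow> 'a set \<Rightarrow> 'a \<Rightarrow> real" where
  "lower_convex_envelope g D x = (SUP h \<in> {h. convex_on D h \<and> (\<forall>y\<in>D. h y \<le> g y)}. h x)"

definition nonneg_orthant :: "(real ^ 'n) set" where
  "nonneg_orthant = {x. \<forall>i. 0 \<le> x $ i}"

end

theory Submission
  imports Defs
begin

text \<open>
  Write \<open>n = CARD('n)\<close>. Every point \<open>x + d\<one>\<close> with \<open>x \<ge> 0\<close> is the barycentre of the \<open>n\<close>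
  vectors \<open>d\<one> + n x\<^sub>i e\<^sub>i\<close>, each of which has at most one entry above \<open>d\<close>; since
  \<open>k \<ge> 2\<close>, \<open>Q\<^sub>k\<close> equals \<open>d\<close> on all of them. By Jensen's inequality every convex minorant
  \<open>f\<close> of \<open>Q\<^sub>k\<close> satisfies \<open>f (x + d\<one>) \<le> d\<close>. On the orthant (\<open>d = 0\<close>) this bounds every
  minorant by the minorant \<open>0\<close>; on all of \<open>\<real>\<^sup>n\<close>, writing \<open>0 = s\<one> - s\<one>\<close> gives
  \<open>f 0 \<le> -s\<close> for every \<open>s \<ge> 0\<close>, which is impossible.
\<close>

lemma Qk_in_entries:
  fixes x :: "real ^ 'n::finite"
  assumes "k \<le> CARD('n)"
  shows "\<exists>i. Qk k x = x $ i"
proof -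
  let ?xs = "rev (sorted_list_of_multiset (image_mset (\<lambda>i. x $ i) (mset_set (UNIV :: 'n set))))"
  have "length ?xs = CARD('n)"
    by (simp flip: size_mset)
  then have "k - 1 < length ?xs"
    using assms zero_less_card_finite[where 'a = 'n] by linarith
  then have "Qk k x \<in> set ?xs"
    unfolding Qk_def by (rule nth_mem)
  then show ?thesis by auto
qed

lemma Qk_nonneg:
  fixes x :: "real ^ 'n::finite"
  assumes "x \<in> nonneg_orthant" "k \<le> CARD('n)"
  shows "0 \<le> Qk k x"
  using Qk_in_entries[OF assms(2), of x] assms(1) by (auto simp: nonneg_orthant_def)

lemma Qk_single_peak:
  fixes i :: "'n::finite"
  assumes "b \<le> a" "2 \<le> k" "k \<le> CARD('n)"
  shows "Qk k (\<chi> j. if j = i then a else b) = b"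
proof -
  let ?x = "(\<chi> j. if j = i then a else b) :: real ^ 'n"
  let ?xs = "replicate (CARD('n) - 1) b @ [a]"
  have "image_mset (\<lambda>j. ?x $ j) (mset_set (UNIV :: 'n set))
      = add_mset a (image_mset (\<lambda>j. ?x $ j) (mset_set (UNIV - {i})))"
    by (subst insert_Diff[of i UNIV, symmetric]) (auto simp del: insert_Diff_single)
  also have "image_mset (\<lambda>j. ?x $ j) (mset_set (UNIV - {i})) = image_mset (\<lambda>j. b) (mset_set (UNIV - {i}))"
    by (rule image_mset_cong) auto
  also have "\<dots> = replicate_mset (CARD('n) - 1) b"
    by (simp add: image_mset_const_eq card_Diff_singleton)
  finally have entries: "image_mset (\<lambda>j. ?x $ j) (mset_set (UNIV :: 'n set)) = mset ?xs"
    by simp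
  have "sorted ?xs"
    using assms(1) by (auto simp: sorted_append)
  then have "Qk k ?x = (a # replicate (CARD('n) - 1) b) ! (k - 1)"
    unfolding Qk_def entries sorted_list_of_multiset_mset by (simp add: sorted_sort_id)
  also have "\<dots> = b"
    using assms(2,3) by (cases "k - 1") auto
  finally show ?thesis .
qed

lemma barycentre_of_peaks:
  fixes x :: "real ^ 'n::finite"
  shows "(\<Sum>i\<in>UNIV. (1 / real CARD('n)) *\<^sub>R (\<chi> j. if j = i then real CARD('n) * x $ i + d else d))
       = x + (\<chi> j. d)"
proof (subst vec_eq_iff, intro allI)
  fix j :: 'n
  have "(\<Sum>i\<in>UNIV. (1 / real CARD('n)) * (if j = i then real CARD('n) * x $ i + d else d))
      = (\<Sum>i\<in>UNIV. (if j = i then x $ i else 0) + d / real CARD('n))"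
    by (rule sum.cong) (auto simp: field_simps)
  also have "\<dots> = x $ j + d"
    by (simp add: sum.distrib)
  finally show "(\<Sum>i\<in>UNIV. (1 / real CARD('n)) *\<^sub>R (\<chi> j. if j = i then real CARD('n) * x $ i + d else d)) $ j
      = (x + (\<chi> j. d)) $ j"
    by simp
qed

lemma convex_minorant_of_Qk_le:
  fixes f :: "real ^ 'n::finite \<Rightarrow> real" and x :: "real ^ 'n"
  assumes f: "convex_on C f" "\<And>y. y \<in> C \<Longrightarrow> f y \<le> Qk k y"
    and k: "2 \<le> k" "k \<le> CARD('n)"
    and x: "\<And>i. 0 \<le> x $ i"
    and peaks: "\<And>i. (\<chi> j. if j = i then real CARD('n) * x $ i + d else d) \<in> C"
  shows "f (x + (\<chi> j. d)) \<le> d"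
proof -
  let ?n = "real CARD('n)"
  define y where "y i = (\<chi> j. if j = i then ?n * x $ i + d else d)" for i
  have "f (x + (\<chi> j. d)) = f (\<Sum>i\<in>UNIV. (1 / ?n) *\<^sub>R y i)"
    unfolding y_def barycentre_of_peaks ..
  also have "\<dots> \<le> (\<Sum>i\<in>UNIV. (1 / ?n) * f (y i))"
    using f(1) peaks by (intro convex_on_sum) (auto simp: y_def)
  also have "\<dots> \<le> (\<Sum>i\<in>UNIV. (1 / ?n) * Qk k (y i))"
    using f(2) peaks by (intro sum_mono mult_left_mono) (auto simp: y_def)
  also have "\<dots> = (\<Sum>i\<in>(UNIV :: 'n set). (1 / ?n) * d)"
    using k x by (intro sum.cong) (auto simp: y_def Qk_single_peak)
  also have "\<dots> = d"
    by simp
  finally show ?thesis .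
qed

lemma convex_nonneg_orthant: "convex (nonneg_orthant :: (real ^ 'n::finite) set)"
  unfolding convex_def nonneg_orthant_def by auto

lemma lower_convex_envelope_Qk_nonneg_orthant:
  fixes x :: "real ^ 'n::finite"
  assumes "x \<in> nonneg_orthant" "2 \<le> k" "k \<le> CARD('n)"
  shows "lower_convex_envelope (Qk k) nonneg_orthant x = 0"
proof -
  let ?H = "{h :: real ^ 'n \<Rightarrow> real. convex_on nonneg_orthant h \<and> (\<forall>y\<in>nonneg_orthant. h y \<le> Qk k y)}"
  have "(\<lambda>_. 0) \<in> ?H"
    using Qk_nonneg[OF _ assms(3)] convex_nonneg_orthant by (simp add: convex_on_const)
  moreover have "h x \<le> 0" if "h \<in> ?H" for h
    using that assms convex_minorant_of_Qk_le[of nonneg_orthant h k x 0]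
    by (simp add: nonneg_orthant_def flip: zero_vec_def)
  ultimately show ?thesis
    unfolding lower_convex_envelope_def by (intro cSup_eq_maximum) auto
qed

lemma no_convex_minorant_of_Qk:
  fixes f :: "real ^ 'n::finite \<Rightarrow> real"
  assumes "2 \<le> k" "k \<le> CARD('n)" "\<And>x. f x \<le> Qk k x"
  shows "\<not> convex_on UNIV f"
proof
  assume "convex_on UNIV f"
  define s where "s = \<bar>f 0\<bar> + 1"
  have "(\<chi> j. s) + (\<chi> j. - s) = (0 :: real ^ 'n)"
    by (simp add: vec_eq_iff)
  moreover have "f ((\<chi> j. s) + (\<chi> j. - s)) \<le> - s"
    by (rule convex_minorant_of_Qk_le[where C = UNIV])
      (use \<open>convex_on UNIV f\<close> assms in \<open>auto simp: s_def\<close>)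
  ultimately show False
    unfolding s_def by simp
qed

theorem theorem2:
  fixes k :: nat
  assumes "CARD('n::finite) \<ge> 2" and "2 \<le> k" and "k \<le> CARD('n)"
  shows "(\<forall>x \<in> (nonneg_orthant :: (real ^ 'n) set).
            lower_convex_envelope (Qk k) nonneg_orthant x = 0)
       \<and> \<not> (\<exists>f :: real ^ 'n \<Rightarrow> real. convex_on UNIV f \<and> (\<forall>x. f x \<le> Qk k x))"
  using lower_convex_envelope_Qk_nonneg_orthant no_convex_minorant_of_Qk assms(2,3) by blast

end
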